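(* Let $\varepsilon\in\{0,\tfrac12\}$. Every commutative post-Lie algebra structure on the Schrödinger–Virasoro Lie algebra $\mathcal{SV}(\varepsilon)$ is trivial: if $\cdot$ is a commutative post-Lie algebra structure on $\mathcal{SV}(\varepsilon)$, then $x\cdot y=0$ for all $x,y\in\mathcal{SV}(\varepsilon)$.
   Context: For $\varepsilon\in\{0,\frac12\}$, $\mathcal{SV}(\varepsilon)$ is the complex Lie algebra with basis $\{L_i,Y_j,M_i\mid i\in\mathbb{Z},\ j\in\varepsilon+\mathbb{Z}\}$ and brackets $[L_m,L_n]=(m-n)L_{m+n}$, $[L_m,Y_n]=(\frac12 m-n)Y_{m+n}$, $[L_m,M_n]=-nM_{m+n}$, $[Y_m,Y_n]=(m-n)M_{m+n}$, $[Y_m,M_n]=[M_m,M_n]=0$. A commutative post-Lie algebra structure on a complex Lie algebra $(L,[\,,])$ is a $\mathbb{C}$-bilinear product $x\cdot y$ on $L$ such that for all $x,y,z\in L$: $x\cdot y=y\cdot x$; $[x,y]\cdot z=x\cdot(y\cdot z)-y\cdot(x\cdot z)$; and $x\cdot[y,z]=[x\cdot y,z]+[y,x\cdot z]$. *)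

theory Defs
  imports Complex_Main
begin

text \<open>Basis of the Schroedinger-Virasoro algebra SV(eps): L_i (i integer),
  Y_j (j real, required to lie in eps + Z), M_i (i integer).\<close>
datatype sv_idx = L int | Y real | M int

text \<open>Structure constants: coefficient of basis vector k in [a,b].\<close>
fun sv_const :: "sv_idx \<Rightarrow> sv_idx \<Rightarrow> sv_idx \<Rightarrow> complex" where
  "sv_const (L m) (L n) k = (if k = L (m + n) then of_int (m - n) else 0)"
| "sv_const (L m) (Y n) k = (if k = Y (of_int m + n) then complex_of_real (of_int m / 2 - n) else 0)"
| "sv_const (Y n) (L m) k = (if k = Y (of_int m + n) then - complex_of_real (of_int m / 2 - n) else 0)"
| "sv_const (L m) (M n) k = (if k = M (m + n) then - of_int n else 0)"
| "sv_const (M n) (L m) k = (if k = M (m + n) then of_int n else 0)"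
| "sv_const (Y m) (Y n) k =
     (case k of M i \<Rightarrow> if of_int i = m + n then complex_of_real (m - n) else 0 | _ \<Rightarrow> 0)"
| "sv_const _ _ _ = 0"

definition SV :: "real \<Rightarrow> (sv_idx \<Rightarrow> complex) set" where
  "SV eps = {f. finite {i. f i \<noteq> 0} \<and> (\<forall>j. f (Y j) \<noteq> 0 \<longrightarrow> j - eps \<in> \<int>)}"

definition sv_bracket :: "(sv_idx \<Rightarrow> complex) \<Rightarrow> (sv_idx \<Rightarrow> complex) \<Rightarrow> (sv_idx \<Rightarrow> complex)" where
  "sv_bracket f g = (\<lambda>k. \<Sum>a\<in>{a. f a \<noteq> 0}. \<Sum>b\<in>{b. g b \<noteq> 0}. f a * g b * sv_const a b k)"

definition comm_post_lie_SV ::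
  "real \<Rightarrow> ((sv_idx \<Rightarrow> complex) \<Rightarrow> (sv_idx \<Rightarrow> complex) \<Rightarrow> (sv_idx \<Rightarrow> complex)) \<Rightarrow> bool" where
  "comm_post_lie_SV eps p \<longleftrightarrow>
     (\<forall>x\<in>SV eps. \<forall>y\<in>SV eps. p x y \<in> SV eps) \<and>
     (\<forall>x\<in>SV eps. \<forall>y\<in>SV eps. \<forall>z\<in>SV eps. p (\<lambda>i. x i + y i) z = (\<lambda>i. p x z i + p y z i)) \<and>
     (\<forall>x\<in>SV eps. \<forall>y\<in>SV eps. \<forall>z\<in>SV eps. p x (\<lambda>i. y i + z i) = (\<lambda>i. p x y i + p x z i)) \<and>
     (\<forall>c::complex. \<forall>x\<in>SV eps. \<forall>y\<in>SV eps. p (\<lambda>i. c * x i) y = (\<lambda>i. c * p x y i)) \<and>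
     (\<forall>c::complex. \<forall>x\<in>SV eps. \<forall>y\<in>SV eps. p x (\<lambda>i. c * y i) = (\<lambda>i. c * p x y i)) \<and>
     (\<forall>x\<in>SV eps. \<forall>y\<in>SV eps. p x y = p y x) \<and>
     (\<forall>x\<in>SV eps. \<forall>y\<in>SV eps. \<forall>z\<in>SV eps.
        p (sv_bracket x y) z = (\<lambda>i. p x (p y z) i - p y (p x z) i)) \<and>
     (\<forall>x\<in>SV eps. \<forall>y\<in>SV eps. \<forall>z\<in>SV eps.
        p x (sv_bracket y z) = (\<lambda>i. sv_bracket (p x y) z i + sv_bracket y (p x z) i))"

end

theory Submission
  imports Defs
begin

text \<open>
  Since \<open>ad L\<^sub>0\<close> is diagonal with eigenvalue \<open>-deg\<close> on basis vectors, the derivation axiom for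
  \<open>[L\<^sub>0, f]\<close> gives \<open>(deg f - deg k) (x\<cdot>f)\<^sub>k = [f, x\<cdot>L\<^sub>0]\<^sub>k\<close>. Comparing coefficients in this and a few
  further instances of the derivation axiom shows that products of basis vectors have no
  \<open>L\<close>- and no \<open>Y\<close>-components. As \<open>M\<^sub>n\<close> is a multiple of some \<open>[Y\<^sub>i, Y\<^sub>j]\<close> and \<open>M\<close> commutes with
  \<open>Y\<close>, also \<open>x\<cdot>M\<^sub>n = 0\<close>, so \<open>x\<cdot>(y\<cdot>z) = 0\<close> for all basis vectors. Finally every basis vector is a
  nonzero multiple of a bracket \<open>[a, b]\<close>, and \<open>[a, b]\<cdot>z = a\<cdot>(b\<cdot>z) - b\<cdot>(a\<cdot>z) = 0\<close>.
\<close>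

section \<open>Basis vectors and the bracket\<close>

definition sv_basis :: "sv_idx \<Rightarrow> sv_idx \<Rightarrow> complex" where
  "sv_basis a = (\<lambda>k. if k = a then 1 else 0)"

fun sv_admissible :: "real \<Rightarrow> sv_idx \<Rightarrow> bool" where
  "sv_admissible eps (L n) = True"
| "sv_admissible eps (Y j) = (j - eps \<in> \<int>)"
| "sv_admissible eps (M n) = True"

fun sv_degree :: "sv_idx \<Rightarrow> real" where
  "sv_degree (L n) = of_int n"
| "sv_degree (Y j) = j"
| "sv_degree (M n) = of_int n"

lemma sv_basis_in_SV: "sv_admissible eps a \<Longrightarrow> sv_basis a \<in> SV eps"
  unfolding SV_def sv_basis_def by (cases a) auto

lemma SV_finite_support: "g \<in> SV eps \<Longrightarrow> finite {i. g i \<noteq> 0}"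
  unfolding SV_def by auto

lemma SV_support_admissible: "g \<in> SV eps \<Longrightarrow> g k \<noteq> 0 \<Longrightarrow> sv_admissible eps k"
  unfolding SV_def by (cases k) auto

lemma SV_scale: "y \<in> SV eps \<Longrightarrow> (\<lambda>i. c * y i) \<in> SV eps"
  unfolding SV_def by (auto elim: finite_subset[rotated])

lemma sum_basis_expansion:
  "finite S \<Longrightarrow> (\<Sum>k\<in>S. c k * sv_basis k i) = (if i \<in> S then c i else 0)"
  by (simp add: sv_basis_def if_distrib[of "(*) _"] sum.delta cong: if_cong)

lemma SV_eq_sum_basis: "g \<in> SV eps \<Longrightarrow> g = (\<lambda>i. \<Sum>k\<in>{k. g k \<noteq> 0}. g k * sv_basis k i)"
  by (auto simp: sum_basis_expansion SV_finite_support)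

lemma sum_support_single:
  fixes g h :: "sv_idx \<Rightarrow> complex"
  assumes "finite {b. g b \<noteq> 0}" and "\<And>b. b \<noteq> b\<^sub>0 \<Longrightarrow> h b = 0"
  shows "(\<Sum>b\<in>{b. g b \<noteq> 0}. g b * h b) = g b\<^sub>0 * h b\<^sub>0"
proof -
  have "(\<Sum>b\<in>{b. g b \<noteq> 0}. g b * h b) = (\<Sum>b\<in>{b. g b \<noteq> 0}. if b = b\<^sub>0 then g b\<^sub>0 * h b\<^sub>0 else 0)"
    by (rule sum.cong) (auto simp: assms(2))
  also have "\<dots> = g b\<^sub>0 * h b\<^sub>0"
    using assms(1) by (simp add: sum.delta')
  finally show ?thesis .
qed

lemma sv_bracket_basis_left:
  "sv_bracket (sv_basis a) g k = (\<Sum>b\<in>{b. g b \<noteq> 0}. g b * sv_const a b k)"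
proof -
  have "{a'. sv_basis a a' \<noteq> 0} = {a}" by (auto simp: sv_basis_def)
  then show ?thesis unfolding sv_bracket_def by (simp add: sv_basis_def)
qed

lemma sv_bracket_L_left_at_L:
  assumes "finite {b. g b \<noteq> 0}"
  shows "sv_bracket (sv_basis (L m)) g (L s) = g (L (s - m)) * of_int (2*m - s)"
proof -
  have "sv_const (L m) b (L s) = 0" if "b \<noteq> L (s - m)" for b
    using that by (cases b) auto
  then show ?thesis
    unfolding sv_bracket_basis_left by (subst sum_support_single[OF assms]) auto
qed

lemma sv_bracket_L_left_at_Y:
  assumes "finite {b. g b \<noteq> 0}"
  shows "sv_bracket (sv_basis (L m)) g (Y s)
    = g (Y (s - of_int m)) * complex_of_real (of_int m / 2 - (s - of_int m))"
proof -
  have "sv_const (L m) b (Y s) = 0" if "b \<noteq> Y (s - of_int m)" for b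
    using that by (cases b) auto
  then show ?thesis
    unfolding sv_bracket_basis_left by (subst sum_support_single[OF assms]) auto
qed

lemma sv_bracket_L_left_at_M:
  assumes "finite {b. g b \<noteq> 0}"
  shows "sv_bracket (sv_basis (L m)) g (M s) = g (M (s - m)) * (- of_int (s - m))"
proof -
  have "sv_const (L m) b (M s) = 0" if "b \<noteq> M (s - m)" for b
    using that by (cases b) auto
  then show ?thesis
    unfolding sv_bracket_basis_left by (subst sum_support_single[OF assms]) auto
qed

lemma sv_bracket_Y_left_at_L: "sv_bracket (sv_basis (Y j)) g (L s) = 0"
proof -
  have "sv_const (Y j) b (L s) = 0" for b by (cases b) auto
  then show ?thesis unfolding sv_bracket_basis_left by simp
qed

lemma sv_bracket_Y_left_at_Y:
  assumes "\<forall>i. g (L i) = 0"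
  shows "sv_bracket (sv_basis (Y j)) g (Y s) = 0"
proof -
  have "g b * sv_const (Y j) b (Y s) = 0" for b using assms by (cases b) auto
  then show ?thesis unfolding sv_bracket_basis_left by (blast intro: sum.neutral)
qed

lemma sv_bracket_Y_left_of_M_part:
  assumes "\<forall>i. g (L i) = 0" and "\<forall>i. g (Y i) = 0"
  shows "sv_bracket (sv_basis (Y j)) g k = 0"
proof -
  have "g b * sv_const (Y j) b k = 0" for b using assms by (cases b) auto
  then show ?thesis unfolding sv_bracket_basis_left by (blast intro: sum.neutral)
qed

lemma sv_const_antisym: "sv_const a b k = - sv_const b a k"
  by (cases a; cases b; cases k) (auto simp: ac_simps)

lemma sv_bracket_antisym: "sv_bracket f g k = - sv_bracket g f k"
proof -
  have "sv_bracket f g k = (\<Sum>b\<in>{b. g b \<noteq> 0}. \<Sum>a\<in>{a. f a \<noteq> 0}. f a * g b * sv_const a b k)"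
    unfolding sv_bracket_def by (rule sum.swap)
  also have "\<dots> = (\<Sum>b\<in>{b. g b \<noteq> 0}. \<Sum>a\<in>{a. f a \<noteq> 0}. - (g b * f a * sv_const b a k))"
    by (subst sv_const_antisym) (simp add: ac_simps)
  also have "\<dots> = - sv_bracket g f k"
    by (simp add: sv_bracket_def sum_negf)
  finally show ?thesis .
qed

lemma sv_bracket_basis: "sv_bracket (sv_basis a) (sv_basis b) = sv_const a b"
proof -
  have "{x. sv_basis b x \<noteq> 0} = {b}" by (auto simp: sv_basis_def)
  then show ?thesis by (simp add: fun_eq_iff sv_bracket_basis_left) (simp add: sv_basis_def)
qed

lemma sv_bracket_basis_L_L:
  "sv_bracket (sv_basis (L m)) (sv_basis (L n)) = (\<lambda>k. of_int (m - n) * sv_basis (L (m + n)) k)"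
  unfolding sv_bracket_basis by (auto simp: sv_basis_def)

lemma sv_bracket_basis_L_Y:
  "sv_bracket (sv_basis (L m)) (sv_basis (Y j))
     = (\<lambda>k. complex_of_real (of_int m / 2 - j) * sv_basis (Y (of_int m + j)) k)"
  unfolding sv_bracket_basis by (auto simp: sv_basis_def)

lemma sv_bracket_basis_L_M:
  "sv_bracket (sv_basis (L m)) (sv_basis (M n)) = (\<lambda>k. - of_int n * sv_basis (M (m + n)) k)"
  unfolding sv_bracket_basis by (auto simp: sv_basis_def)

lemma sv_bracket_basis_Y_Y:
  "of_int n = i + j \<Longrightarrow>
   sv_bracket (sv_basis (Y i)) (sv_basis (Y j)) = (\<lambda>k. complex_of_real (i - j) * sv_basis (M n) k)"
  unfolding sv_bracket_basis by (auto simp: sv_basis_def fun_eq_iff split: sv_idx.split)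

lemma sv_bracket_basis_L0:
  "sv_bracket (sv_basis (L 0)) (sv_basis a) = (\<lambda>k. - complex_of_real (sv_degree a) * sv_basis a k)"
  by (cases a) (auto simp: sv_bracket_basis_L_L sv_bracket_basis_L_Y sv_bracket_basis_L_M)

lemma sv_bracket_L0_left:
  "finite {b. g b \<noteq> 0} \<Longrightarrow> sv_bracket (sv_basis (L 0)) g k = - complex_of_real (sv_degree k) * g k"
  by (cases k) (auto simp: sv_bracket_L_left_at_L sv_bracket_L_left_at_Y sv_bracket_L_left_at_M)

lemma complex_of_int_eq_of_real_iff: "complex_of_int b = complex_of_real x \<longleftrightarrow> real_of_int b = x"
  by (metis of_real_eq_iff of_real_of_int_eq)

lemma complex_of_real_eq_of_int_iff: "complex_of_real x = complex_of_int b \<longleftrightarrow> x = real_of_int b"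
  by (metis of_real_eq_iff of_real_of_int_eq)

lemma half_not_in_Ints: "(1/2::real) \<notin> \<int>"
proof
  assume "(1/2::real) \<in> \<int>"
  then obtain n :: int where "1/2 = (of_int n :: real)" by (auto elim: Ints_cases)
  then have "(1::int) = 2 * n" by linarith
  then show False by presburger
qed

lemma integral_admissible_Y_imp_eps_0:
  assumes "eps = 0 \<or> eps = 1/2" and "sv_admissible eps (Y (of_int k))"
  shows "eps = 0"
proof -
  have "of_int k - (of_int k - eps) \<in> \<int>"
    using assms(2) by (intro Ints_diff) simp_all
  then show ?thesis using assms(1) half_not_in_Ints by force
qed

lemma admissible_Y_double_integral:
  assumes "eps = 0 \<or> eps = 1/2" and "sv_admissible eps (Y j)"
  obtains m :: int where "of_int m = 2 * j"
proof -
  obtain n :: int where n: "j - eps = of_int n" using assms(2) by (auto elim: Ints_cases)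
  from assms(1) show ?thesis
  proof
    assume "eps = 0" then show ?thesis using n by (intro that[of "2 * n"]) simp
  next
    assume "eps = 1/2" then show ?thesis using n by (intro that[of "2 * n + 1"]) simp
  qed
qed

lemma sv_basis_M_is_bracket_Y_Y:
  assumes "eps = 0 \<or> eps = 1/2"
  obtains i j where "sv_admissible eps (Y i)" "sv_admissible eps (Y j)" "i \<noteq> j"
    "sv_bracket (sv_basis (Y i)) (sv_basis (Y j)) = (\<lambda>k. complex_of_real (i - j) * sv_basis (M n) k)"
proof -
  define m :: int where "m = (if n \<ge> 0 then n + 1 else n - 1)"
  define i where "i = eps + of_int m"
  have "2 * eps \<in> {0, 1}" using assms by auto
  then have "2 * eps \<in> \<int>" by auto
  then have "of_int (n - m) - 2 * eps \<in> \<int>" by (intro Ints_diff) simp_all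
  then have "sv_admissible eps (Y (of_int n - i))" unfolding i_def by (simp add: algebra_simps)
  moreover have "i \<noteq> of_int n - i" unfolding i_def m_def using assms by auto
  ultimately show ?thesis
    by (intro that[of i "of_int n - i"]) (simp_all add: i_def sv_bracket_basis_Y_Y)
qed

lemma sv_basis_is_bracket:
  assumes "eps = 0 \<or> eps = 1/2" and "sv_admissible eps e"
  obtains a b c where "sv_admissible eps a" "sv_admissible eps b" "c \<noteq> 0"
    "sv_bracket (sv_basis a) (sv_basis b) = (\<lambda>k. c * sv_basis e k)"
proof (cases e)
  case (L n)
  show ?thesis
  proof (cases "n = 0")
    case True then show ?thesis using L
      by (intro that[of "L 1" "L (-1)" 2]) (simp_all add: sv_bracket_basis_L_L)
  next
    case False then show ?thesis using L
      by (intro that[of "L 0" "L n" "- of_int n"]) (simp_all add: sv_bracket_basis_L_L)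
  qed
next
  case (Y j)
  show ?thesis
  proof (cases "j = 0")
    case True
    with assms Y have "eps = 0" using integral_admissible_Y_imp_eps_0[of eps 0] by simp
    then show ?thesis using True Y
      by (intro that[of "L 1" "Y (-1)" "complex_of_real (3/2)"]) (simp_all add: sv_bracket_basis_L_Y)
  next
    case False then show ?thesis using Y assms(2)
      by (intro that[of "L 0" "Y j" "complex_of_real (-j)"]) (simp_all add: sv_bracket_basis_L_Y)
  qed
next
  case (M n)
  show ?thesis
  proof (cases "n = 0")
    case True then show ?thesis using M
      by (intro that[of "L 1" "M (-1)" 1]) (simp_all add: sv_bracket_basis_L_M)
  next
    case False then show ?thesis using M
      by (intro that[of "L 0" "M n" "- of_int n"]) (simp_all add: sv_bracket_basis_L_M)
  qed
qed

lemma sum_basis_in_SV: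
  assumes "finite S" and "\<forall>k\<in>S. sv_admissible eps k"
  shows "(\<lambda>i. \<Sum>k\<in>S. c k * sv_basis k i) \<in> SV eps"
proof -
  have "finite {i. (if i \<in> S then c i else 0) \<noteq> 0}"
    using assms(1) by (rule finite_subset[rotated]) auto
  with assms show ?thesis
    unfolding sum_basis_expansion[OF assms(1)] SV_def by (auto split: if_splits)
qed

section \<open>Commutative post-Lie structures\<close>

locale SV_comm_post_lie =
  fixes eps :: real
    and p :: "(sv_idx \<Rightarrow> complex) \<Rightarrow> (sv_idx \<Rightarrow> complex) \<Rightarrow> (sv_idx \<Rightarrow> complex)"
  assumes eps_cases: "eps = 0 \<or> eps = 1/2"
    and comm_post_lie: "comm_post_lie_SV eps p"
begin

lemma prod_in_SV: "x \<in> SV eps \<Longrightarrow> y \<in> SV eps \<Longrightarrow> p x y \<in> SV eps"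
  using comm_post_lie unfolding comm_post_lie_SV_def by (elim conjE) (simp only: Ball_def)

lemma prod_add_right:
  "x \<in> SV eps \<Longrightarrow> y \<in> SV eps \<Longrightarrow> z \<in> SV eps \<Longrightarrow> p x (\<lambda>i. y i + z i) = (\<lambda>i. p x y i + p x z i)"
  using comm_post_lie unfolding comm_post_lie_SV_def by (elim conjE) (simp only: Ball_def)

lemma prod_scale_left: "x \<in> SV eps \<Longrightarrow> y \<in> SV eps \<Longrightarrow> p (\<lambda>i. c * x i) y = (\<lambda>i. c * p x y i)"
  using comm_post_lie unfolding comm_post_lie_SV_def by (elim conjE) (simp only: Ball_def)

lemma prod_scale_right: "x \<in> SV eps \<Longrightarrow> y \<in> SV eps \<Longrightarrow> p x (\<lambda>i. c * y i) = (\<lambda>i. c * p x y i)"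
  using comm_post_lie unfolding comm_post_lie_SV_def by (elim conjE) (simp only: Ball_def)

lemma prod_commute: "x \<in> SV eps \<Longrightarrow> y \<in> SV eps \<Longrightarrow> p x y = p y x"
  using comm_post_lie unfolding comm_post_lie_SV_def by (elim conjE) (simp only: Ball_def)

lemma prod_bracket_left: "x \<in> SV eps \<Longrightarrow> y \<in> SV eps \<Longrightarrow> z \<in> SV eps \<Longrightarrow>
   p (sv_bracket x y) z = (\<lambda>i. p x (p y z) i - p y (p x z) i)"
  using comm_post_lie unfolding comm_post_lie_SV_def by (elim conjE) (simp only: Ball_def)

lemma prod_derivation: "x \<in> SV eps \<Longrightarrow> y \<in> SV eps \<Longrightarrow> z \<in> SV eps \<Longrightarrow>
   p x (sv_bracket y z) = (\<lambda>i. sv_bracket (p x y) z i + sv_bracket y (p x z) i)"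
  using comm_post_lie unfolding comm_post_lie_SV_def by (elim conjE) (simp only: Ball_def)

lemma prod_finite_support: "x \<in> SV eps \<Longrightarrow> y \<in> SV eps \<Longrightarrow> finite {i. p x y i \<noteq> 0}"
  using prod_in_SV SV_finite_support by blast

lemma prod_sum_basis_right:
  assumes x: "x \<in> SV eps" and "finite S" and "\<forall>k\<in>S. sv_admissible eps k"
  shows "p x (\<lambda>i. \<Sum>k\<in>S. c k * sv_basis k i) = (\<lambda>i. \<Sum>k\<in>S. c k * p x (sv_basis k) i)"
  using assms(2,3)
proof (induction S rule: finite_induct)
  case empty
  have "p x (\<lambda>i. 0 * sv_basis (L 0) i) = (\<lambda>i. 0 * p x (sv_basis (L 0)) i)"
    using x by (intro prod_scale_right) (simp_all add: sv_basis_in_SV)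
  then show ?case by simp
next
  case (insert k S)
  then have k: "sv_basis k \<in> SV eps" by (simp add: sv_basis_in_SV)
  have "p x (\<lambda>i. \<Sum>k\<in>insert k S. c k * sv_basis k i)
      = p x (\<lambda>i. c k * sv_basis k i + (\<Sum>k\<in>S. c k * sv_basis k i))"
    using insert by simp
  also have "\<dots> = (\<lambda>i. c k * p x (sv_basis k) i + (\<Sum>k\<in>S. c k * p x (sv_basis k) i))"
    using insert k x by (simp add: prod_add_right prod_scale_right sum_basis_in_SV SV_scale)
  also have "\<dots> = (\<lambda>i. \<Sum>k\<in>insert k S. c k * p x (sv_basis k) i)"
    using insert by simp
  finally show ?case .
qed

lemma prod_expand_right:
  assumes "x \<in> SV eps" and v: "v \<in> SV eps"
  shows "p x v = (\<lambda>i. \<Sum>k\<in>{k. v k \<noteq> 0}. v k * p x (sv_basis k) i)"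
  using assms SV_finite_support[OF v] SV_support_admissible[OF v]
  by (subst SV_eq_sum_basis[OF v]) (simp add: prod_sum_basis_right)

section \<open>Coefficients of products of basis vectors\<close>

abbreviation basis_prod :: "sv_idx \<Rightarrow> sv_idx \<Rightarrow> sv_idx \<Rightarrow> complex" where
  "basis_prod a b \<equiv> p (sv_basis a) (sv_basis b)"

lemma basis_prod_commute:
  "sv_admissible eps a \<Longrightarrow> sv_admissible eps b \<Longrightarrow> basis_prod a b = basis_prod b a"
  by (rule prod_commute) (simp_all add: sv_basis_in_SV)

lemma basis_prod_finite_support:
  "sv_admissible eps a \<Longrightarrow> sv_admissible eps b \<Longrightarrow> finite {i. basis_prod a b i \<noteq> 0}"
  by (rule prod_finite_support) (simp_all add: sv_basis_in_SV)

lemma prod_basis_bracket: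
  assumes x: "x \<in> SV eps"
    and "sv_admissible eps a" "sv_admissible eps b" "sv_admissible eps e"
    and bracket: "sv_bracket (sv_basis a) (sv_basis b) = (\<lambda>k. c * sv_basis e k)"
  shows "c * p x (sv_basis e) k
    = sv_bracket (p x (sv_basis a)) (sv_basis b) k + sv_bracket (sv_basis a) (p x (sv_basis b)) k"
proof -
  have "(\<lambda>k. c * p x (sv_basis e) k) = p x (sv_bracket (sv_basis a) (sv_basis b))"
    unfolding bracket using prod_scale_right[OF x sv_basis_in_SV[OF assms(4)]] by simp
  also have "\<dots> = (\<lambda>k. sv_bracket (p x (sv_basis a)) (sv_basis b) k + sv_bracket (sv_basis a) (p x (sv_basis b)) k)"
    using assms(2,3) by (intro prod_derivation[OF x]) (simp_all add: sv_basis_in_SV)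
  finally show ?thesis by (rule fun_cong)
qed

lemma degree_identity:
  assumes x: "x \<in> SV eps" and f: "sv_admissible eps f"
  shows "complex_of_real (sv_degree f - sv_degree k) * p x (sv_basis f) k
    = sv_bracket (sv_basis f) (p x (sv_basis (L 0))) k"
proof -
  have "- complex_of_real (sv_degree f) * p x (sv_basis f) k
      = sv_bracket (p x (sv_basis (L 0))) (sv_basis f) k + sv_bracket (sv_basis (L 0)) (p x (sv_basis f)) k"
    using assms by (intro prod_basis_bracket) (simp_all add: sv_bracket_basis_L0)
  then show ?thesis
    using sv_bracket_antisym[of "p x (sv_basis (L 0))"] f x
    by (simp add: sv_bracket_L0_left prod_finite_support sv_basis_in_SV algebra_simps)
qed

lemma prod_L_L_at_L:
  "of_int (b - c) * basis_prod (L a) (L b) (L c) = basis_prod (L a) (L 0) (L (c - b)) * of_int (2*b - c)"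
  using degree_identity[of "sv_basis (L a)" "L b" "L c"]
    sv_bracket_L_left_at_L[OF basis_prod_finite_support[of "L a" "L 0"]]
  by (simp add: sv_basis_in_SV)

lemma prod_L_L_at_L':
  "of_int (a - c) * basis_prod (L a) (L b) (L c) = basis_prod (L b) (L 0) (L (c - a)) * of_int (2*a - c)"
  using prod_L_L_at_L[where a = b and b = a] basis_prod_commute[of "L a" "L b"] by simp

lemma prod_L0_L0_at_L:
  assumes "j \<noteq> 0"
  shows "basis_prod (L 0) (L 0) (L j) = 0"
proof -
  have "basis_prod (L j) (L (2*j)) (L (4*j)) = 0"
    using prod_L_L_at_L[where a = j and b = "2*j" and c = "4*j"] assms by simp
  then have "basis_prod (L (2*j)) (L 0) (L (3*j)) = 0"
    using prod_L_L_at_L'[where a = j and b = "2*j" and c = "4*j"] assms by simp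
  then show ?thesis
    using prod_L_L_at_L'[where a = "2*j" and b = 0 and c = "3*j"] assms by simp
qed

lemma prod_L_L0_at_L_off_diagonal: "s \<noteq> a \<Longrightarrow> basis_prod (L a) (L 0) (L s) = 0"
  using prod_L_L_at_L'[where a = a and b = 0 and c = s] prod_L0_L0_at_L[of "s - a"] by simp

lemma prod_L_L0_at_L_diagonal_relation:
  assumes "a \<noteq> b"
  shows "of_int b * basis_prod (L a) (L 0) (L a) + of_int a * basis_prod (L b) (L 0) (L b) = 0"
proof -
  define X where "X = basis_prod (L a) (L b) (L (a + b))"
  have "- of_int a * X = basis_prod (L a) (L 0) (L a) * (of_int b - of_int a)"
    using prod_L_L_at_L[where a = a and b = b and c = "a + b"] unfolding X_def by simp
  moreover have "- of_int b * X = basis_prod (L b) (L 0) (L b) * (of_int a - of_int b)"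
    using prod_L_L_at_L'[where a = a and b = b and c = "a + b"] unfolding X_def by simp
  ultimately have "(of_int b - of_int a) *
      (of_int b * basis_prod (L a) (L 0) (L a) + of_int a * basis_prod (L b) (L 0) (L b)) = (0::complex)"
    by (simp add: algebra_simps)
  then show ?thesis using assms by simp
qed

lemma prod_L_L0_at_L_diagonal:
  assumes "a \<noteq> 0"
  shows "basis_prod (L a) (L 0) (L a) = 0"
proof -
  define q where "q n = basis_prod (L n) (L 0) (L n)" for n
  have a: "(of_int a :: complex) \<noteq> 0" using assms by simp
  have "of_int a * (2 * q a + q (2*a)) = 0"
    using prod_L_L0_at_L_diagonal_relation[of a "2*a"] assms unfolding q_def by (simp add: algebra_simps)
  then have q2: "q (2*a) = - 2 * q a" using a by (simp add: eq_neg_iff_add_eq_0 add.commute)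
  have "of_int a * (3 * q a + q (3*a)) = 0"
    using prod_L_L0_at_L_diagonal_relation[of a "3*a"] assms unfolding q_def by (simp add: algebra_simps)
  then have q3: "q (3*a) = - 3 * q a" using a by (simp add: eq_neg_iff_add_eq_0 add.commute)
  have "of_int a * (-12 * q a) = 0"
    using prod_L_L0_at_L_diagonal_relation[of "2*a" "3*a"] assms unfolding q_def[symmetric] q2 q3
    by (simp add: algebra_simps)
  then show ?thesis using a unfolding q_def by simp
qed

lemma prod_L_L_at_L_off_diagonal: "c \<noteq> b \<Longrightarrow> basis_prod (L a) (L b) (L c) = 0"
proof -
  assume "c \<noteq> b"
  moreover have "basis_prod (L a) (L 0) (L (c - b)) = 0"
    using \<open>c \<noteq> b\<close> prod_L_L0_at_L_off_diagonal prod_L_L0_at_L_diagonal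
    by (cases "c - b = a") auto
  ultimately show ?thesis using prod_L_L_at_L[of b c a] by simp
qed

lemma prod_L_L_at_L_off_diagonal': "c \<noteq> a \<Longrightarrow> basis_prod (L a) (L b) (L c) = 0"
  using prod_L_L_at_L_off_diagonal[of c a b] basis_prod_commute[of "L a" "L b"] by simp

lemma prod_basis_bracket_L_L:
  "sv_admissible eps x \<Longrightarrow> of_int (a - c) * basis_prod x (L (a + c)) k
    = sv_bracket (basis_prod x (L a)) (sv_basis (L c)) k + sv_bracket (sv_basis (L a)) (basis_prod x (L c)) k"
  by (rule prod_basis_bracket) (simp_all add: sv_basis_in_SV sv_bracket_basis_L_L)

lemma prod_L_L_at_L_diagonal: "basis_prod (L a) (L a) (L a) = 0"
proof -
  define c where "c = \<bar>a\<bar> + 1"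
  have c: "c \<noteq> 0" "c \<noteq> a" unfolding c_def by auto
  have "sv_bracket (sv_basis (L a)) (basis_prod (L a) (L c)) (L (a + c)) = 0"
    using sv_bracket_L_left_at_L[OF basis_prod_finite_support[of "L a" "L c"], of a "a + c"]
      prod_L_L_at_L_off_diagonal'[of c a c] c by simp
  moreover have "sv_bracket (basis_prod (L a) (L a)) (sv_basis (L c)) (L (a + c))
      = - (basis_prod (L a) (L a) (L a) * of_int (c - a))"
    using sv_bracket_antisym[of "basis_prod (L a) (L a)" "sv_basis (L c)" "L (a + c)"]
      sv_bracket_L_left_at_L[OF basis_prod_finite_support[of "L a" "L a"], of c "a + c"] by simp
  ultimately show ?thesis
    using prod_basis_bracket_L_L[of "L a" a c "L (a + c)"] prod_L_L_at_L_off_diagonal'[of "a + c" a] c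
    by simp
qed

lemma basis_prod_L_L_at_L: "basis_prod (L a) (L b) (L c) = 0"
  using prod_L_L_at_L_off_diagonal[of c b a] prod_L_L_at_L_off_diagonal'[of c a b]
    prod_L_L_at_L_diagonal[of a]
  by (cases "c = b"; cases "c = a") auto

lemma prod_L_L_at_Y:
  "- complex_of_real s * basis_prod (L a) (L b) (Y (of_int b + s))
    = basis_prod (L a) (L 0) (Y s) * complex_of_real (of_int b / 2 - s)"
  using degree_identity[of "sv_basis (L a)" "L b" "Y (of_int b + s)"]
    sv_bracket_L_left_at_Y[OF basis_prod_finite_support[of "L a" "L 0"]]
  by (simp add: sv_basis_in_SV)

lemma prod_L_L_at_Y':
  "- complex_of_real s * basis_prod (L a) (L b) (Y (of_int a + s))
    = basis_prod (L b) (L 0) (Y s) * complex_of_real (of_int a / 2 - s)"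
  using prod_L_L_at_Y[where a = b and b = a] basis_prod_commute[of "L a" "L b"] by simp

lemma prod_L0_L0_at_Y: "basis_prod (L 0) (L 0) (Y j) = 0"
proof (rule ccontr)
  assume nonzero: "basis_prod (L 0) (L 0) (Y j) \<noteq> 0"
  then have "sv_admissible eps (Y j)"
    by (intro SV_support_admissible[OF prod_in_SV]) (simp_all add: sv_basis_in_SV)
  then obtain m :: int where m: "of_int m = 2 * j"
    using admissible_Y_double_integral[OF eps_cases] by blast
  define t :: int where "t = (if j \<ge> 0 then 1 else -1)"
  define b where "b = m + 2 * t"
  \<comment> \<open>chosen so that \<open>b/2 - j = t\<close>; this is where \<open>2 j \<in> \<int>\<close> is needed\<close>
  have bt: "of_int b / 2 - j = of_int t" unfolding b_def using m by (simp add: field_simps)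
  have tj: "of_int t + j \<noteq> 0" "of_int t / 2 - (of_int b + j) \<noteq> 0"
    unfolding t_def b_def using m by auto
  define X where "X = basis_prod (L t) (L b) (Y (of_int b + (of_int t + j)))"
  have "of_int b / 2 - (of_int t + j) = (0::real)" using bt by simp
  then have "- complex_of_real (of_int t + j) * X = 0"
    using prod_L_L_at_Y[where a = t and b = b and s = "of_int t + j"] unfolding X_def by simp
  then have "X = 0" using tj(1) by (simp del: of_real_add add: of_real_add[symmetric])
  moreover have "- complex_of_real (of_int b + j) * X
      = basis_prod (L b) (L 0) (Y (of_int b + j)) * complex_of_real (of_int t / 2 - (of_int b + j))"
    using prod_L_L_at_Y'[where a = t and b = b and s = "of_int b + j"] unfolding X_def
    by (simp add: algebra_simps)
  ultimately have "basis_prod (L b) (L 0) (Y (of_int b + j)) * complex_of_real (of_int t / 2 - (of_int b + j)) = 0"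
    by simp
  then have "basis_prod (L b) (L 0) (Y (of_int b + j)) = 0"
    using tj(2) by (simp only: mult_eq_0_iff of_real_eq_0_iff) simp
  then have "basis_prod (L 0) (L 0) (Y j) * of_int t = 0"
    using prod_L_L_at_Y'[where a = b and b = 0 and s = j] bt by simp
  then show False using nonzero unfolding t_def by (simp split: if_splits)
qed

lemma prod_L_L0_at_Y_off_diagonal: "s \<noteq> of_int a \<Longrightarrow> basis_prod (L a) (L 0) (Y s) = 0"
  using prod_L_L_at_Y'[where a = a and b = 0 and s = "s - of_int a"] prod_L0_L0_at_Y[of "s - of_int a"]
  by (simp add: complex_of_int_eq_of_real_iff)

lemma prod_L_L0_at_Y_diagonal_even: "a \<noteq> 0 \<Longrightarrow> basis_prod (L (2*a)) (L 0) (Y (of_int (2*a))) = 0"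
  using prod_L_L_at_Y[where a = a and b = "2*a" and s = "of_int a"]
    prod_L_L_at_Y'[where a = a and b = "2*a" and s = "of_int (2*a)"]
  by (simp add: algebra_simps)

lemma prod_L_L0_at_Y_diagonal: "basis_prod (L a) (L 0) (Y (of_int a)) = 0"
proof (cases "a = 0")
  case True
  then show ?thesis using prod_L0_L0_at_Y by simp
next
  case False
  define X where "X = basis_prod (L a) (L (4*a)) (Y (of_int (5*a)))"
  have "- of_int (4*a) * X = 0"
    using prod_L_L_at_Y'[where a = a and b = "4*a" and s = "of_int (4*a)"]
      prod_L_L0_at_Y_diagonal_even[of "2*a"] False unfolding X_def by (simp add: algebra_simps)
  then have "X = 0" using False by simp
  then show ?thesis
    using prod_L_L_at_Y[where a = a and b = "4*a" and s = "of_int a"] False unfolding X_def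
    by (simp add: algebra_simps)
qed

lemma prod_L_L0_at_Y: "basis_prod (L a) (L 0) (Y s) = 0"
  using prod_L_L0_at_Y_off_diagonal[of s a] prod_L_L0_at_Y_diagonal[of a]
  by (cases "s = of_int a") auto

lemma prod_L_L_at_Y_off_diagonal: "k \<noteq> of_int b \<Longrightarrow> basis_prod (L a) (L b) (Y k) = 0"
  using prod_L_L_at_Y[where a = a and b = b and s = "k - of_int b"] prod_L_L0_at_Y
  by (simp add: complex_of_int_eq_of_real_iff)

lemma prod_L_L_at_Y_off_diagonal': "k \<noteq> of_int a \<Longrightarrow> basis_prod (L a) (L b) (Y k) = 0"
  using prod_L_L_at_Y_off_diagonal[of k a b] basis_prod_commute[of "L a" "L b"] by simp

lemma prod_L_L_at_Y_diagonal: "basis_prod (L a) (L a) (Y (of_int a)) = 0"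
proof -
  define c where "c = 3 * \<bar>a\<bar> + 1"
  define k where "k = Y (of_int a + of_int c)"
  have c: "c \<noteq> 0" "c \<noteq> a" "of_int c / 2 - of_int a \<noteq> (0::real)" unfolding c_def by auto
  have "sv_bracket (sv_basis (L a)) (basis_prod (L a) (L c)) k = 0"
    using sv_bracket_L_left_at_Y[OF basis_prod_finite_support[of "L a" "L c"], of a "of_int a + of_int c"]
      prod_L_L_at_Y_off_diagonal'[of "of_int c" a c] c unfolding k_def by simp
  moreover have "sv_bracket (basis_prod (L a) (L a)) (sv_basis (L c)) k
      = - (basis_prod (L a) (L a) (Y (of_int a)) * complex_of_real (of_int c / 2 - of_int a))"
    using sv_bracket_antisym[of "basis_prod (L a) (L a)" "sv_basis (L c)" k]
      sv_bracket_L_left_at_Y[OF basis_prod_finite_support[of "L a" "L a"], of c "of_int a + of_int c"]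
    unfolding k_def by simp
  moreover have "basis_prod (L a) (L (a + c)) k = 0"
    using prod_L_L_at_Y_off_diagonal' c unfolding k_def by simp
  ultimately have "basis_prod (L a) (L a) (Y (of_int a)) * complex_of_real (of_int c / 2 - of_int a) = 0"
    using prod_basis_bracket_L_L[of "L a" a c k] c by simp
  then show ?thesis using c(3) by (simp only: mult_eq_0_iff of_real_eq_0_iff) simp
qed

lemma basis_prod_L_L_at_Y: "basis_prod (L a) (L b) (Y k) = 0"
  using prod_L_L_at_Y_off_diagonal[of k b a] prod_L_L_at_Y_off_diagonal'[of k a b]
    prod_L_L_at_Y_diagonal[of a]
  by (cases "k = of_int b"; cases "k = of_int a") auto

lemma prod_Y_at_L_integral_nonzero:
  assumes x: "x \<in> SV eps" and eps: "eps = 0" and "b \<noteq> 0"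
  shows "p x (sv_basis (Y (of_int b))) (L b) = 0"
proof -
  \<comment> \<open>\<open>[L\<^sub>2\<^sub>b, Y\<^sub>b] = 0\<close>, while the derivation rule at \<open>L\<^sub>3\<^sub>b\<close> picks out \<open>(x\<cdot>Y\<^sub>b)\<^sub>L\<^sub>b\<close>\<close>
  have "0 * p x (sv_basis (L 0)) (L (3*b))
      = sv_bracket (p x (sv_basis (L (2*b)))) (sv_basis (Y (of_int b))) (L (3*b))
        + sv_bracket (sv_basis (L (2*b))) (p x (sv_basis (Y (of_int b)))) (L (3*b))"
    using eps by (intro prod_basis_bracket[OF x]) (simp_all add: sv_bracket_basis_L_Y)
  then show ?thesis
    using sv_bracket_antisym[of "p x (sv_basis (L (2*b)))" "sv_basis (Y (of_int b))"]
      sv_bracket_L_left_at_L[OF prod_finite_support[OF x sv_basis_in_SV], of "Y (of_int b)" "2*b" "3*b"]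
      sv_bracket_Y_left_at_L eps assms(3)
    by simp
qed

lemma prod_Y0_at_L0:
  assumes x: "x \<in> SV eps" and eps: "eps = 0"
  shows "p x (sv_basis (Y 0)) (L 0) = 0"
proof -
  have "complex_of_real (3/2) * p x (sv_basis (Y 0)) (L 0)
      = sv_bracket (p x (sv_basis (L 1))) (sv_basis (Y (-1))) (L 0)
        + sv_bracket (sv_basis (L 1)) (p x (sv_basis (Y (-1)))) (L 0)"
    using eps by (intro prod_basis_bracket[OF x]) (simp_all add: sv_bracket_basis_L_Y)
  then show ?thesis
    using sv_bracket_antisym[of "p x (sv_basis (L 1))" "sv_basis (Y (-1))"]
      sv_bracket_L_left_at_L[OF prod_finite_support[OF x sv_basis_in_SV], of "Y (-1)" 1 0]
      sv_bracket_Y_left_at_L prod_Y_at_L_integral_nonzero[OF x eps, of "-1"] eps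
    by simp
qed

lemma prod_Y_at_L:
  assumes x: "x \<in> SV eps" and j: "sv_admissible eps (Y j)"
  shows "p x (sv_basis (Y j)) (L k) = 0"
proof (cases "j = of_int k")
  case False
  then show ?thesis
    using degree_identity[OF x j, of "L k"] sv_bracket_Y_left_at_L
    by (simp add: complex_of_real_eq_of_int_iff)
next
  case True
  then have eps: "eps = 0"
    using integral_admissible_Y_imp_eps_0[OF eps_cases] j by simp
  show ?thesis
    using True prod_Y_at_L_integral_nonzero[OF x eps, of k] prod_Y0_at_L0[OF x eps]
    by (cases "k = 0") simp_all
qed

lemma prod_M_via_Y_Y:
  assumes x: "x \<in> SV eps"
  obtains i j where "sv_admissible eps (Y i)" "sv_admissible eps (Y j)" "i \<noteq> j"
    "\<And>k. complex_of_real (i - j) * p x (sv_basis (M n)) k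
      = sv_bracket (sv_basis (Y i)) (p x (sv_basis (Y j))) k - sv_bracket (sv_basis (Y j)) (p x (sv_basis (Y i))) k"
proof -
  obtain i j where i: "sv_admissible eps (Y i)" and j: "sv_admissible eps (Y j)" and "i \<noteq> j"
    and bracket: "sv_bracket (sv_basis (Y i)) (sv_basis (Y j)) = (\<lambda>k. complex_of_real (i - j) * sv_basis (M n) k)"
    using sv_basis_M_is_bracket_Y_Y[OF eps_cases] by blast
  show ?thesis
    using prod_basis_bracket[OF x i j _ bracket] sv_bracket_antisym[of "p x (sv_basis (Y i))"]
    by (intro that[OF i j \<open>i \<noteq> j\<close>]) simp_all
qed

lemma prod_M_at_L_and_Y:
  assumes x: "x \<in> SV eps"
  shows "p x (sv_basis (M n)) (L k) = 0 \<and> p x (sv_basis (M n)) (Y s) = 0"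
proof -
  obtain i j where i: "sv_admissible eps (Y i)" and j: "sv_admissible eps (Y j)" and "i \<noteq> j"
    and expand: "\<And>k. complex_of_real (i - j) * p x (sv_basis (M n)) k
      = sv_bracket (sv_basis (Y i)) (p x (sv_basis (Y j))) k - sv_bracket (sv_basis (Y j)) (p x (sv_basis (Y i))) k"
    using prod_M_via_Y_Y[OF x] by blast
  have "\<forall>t. p x (sv_basis (Y i)) (L t) = 0" "\<forall>t. p x (sv_basis (Y j)) (L t) = 0"
    using prod_Y_at_L[OF x i] prod_Y_at_L[OF x j] by auto
  then have "complex_of_real (i - j) * p x (sv_basis (M n)) (L k) = 0"
    "complex_of_real (i - j) * p x (sv_basis (M n)) (Y s) = 0"
    unfolding expand by (simp_all add: sv_bracket_Y_left_at_L sv_bracket_Y_left_at_Y)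
  then show ?thesis using \<open>i \<noteq> j\<close> by simp
qed

lemma basis_prod_at_L:
  assumes a: "sv_admissible eps a" and b: "sv_admissible eps b"
  shows "basis_prod a b (L k) = 0"
proof -
  consider m n where "a = L m" "b = L n" | j where "b = Y j" | j where "a = Y j"
    | n where "b = M n" | n where "a = M n"
    by (cases a; cases b) auto
  then show ?thesis
  proof cases
    case 1
    then show ?thesis using basis_prod_L_L_at_L by simp
  next
    case 2
    then show ?thesis using prod_Y_at_L[OF sv_basis_in_SV[OF a]] b by simp
  next
    case 3
    then show ?thesis using prod_Y_at_L[OF sv_basis_in_SV[OF b]] a basis_prod_commute[OF a b] by simp
  next
    case 4
    then show ?thesis using prod_M_at_L_and_Y[OF sv_basis_in_SV[OF a]] by simp
  next
    case 5
    then show ?thesis using prod_M_at_L_and_Y[OF sv_basis_in_SV[OF b]] basis_prod_commute[OF a b] by simp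
  qed
qed

lemma prod_Y_at_Y_off_diagonal:
  assumes x: "sv_admissible eps x" and j: "sv_admissible eps (Y j)" and "k \<noteq> j"
  shows "basis_prod x (Y j) (Y k) = 0"
proof -
  have "\<forall>i. basis_prod x (L 0) (L i) = 0" using basis_prod_at_L[OF x] by simp
  then show ?thesis
    using degree_identity[OF sv_basis_in_SV[OF x] j, of "Y k"] \<open>k \<noteq> j\<close> sv_bracket_Y_left_at_Y
    by simp
qed

lemma prod_Y_at_Y_diagonal_shift:
  assumes x: "sv_admissible eps x" and j: "sv_admissible eps (Y j)"
  obtains a :: int where "a \<noteq> 0" "sv_admissible eps (Y (of_int a + j))"
    "basis_prod x (Y (of_int a + j)) (Y (of_int a + j)) = basis_prod x (Y j) (Y j)"
proof -
  define a :: int where "a = (if j = 1/2 then 2 else 1)"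
  have "a \<noteq> 0" and a: "of_int a / 2 - j \<noteq> 0" unfolding a_def by auto
  have aj: "sv_admissible eps (Y (of_int a + j))"
    using j Ints_add[OF Ints_of_int[of a], of "j - eps"] by (simp add: algebra_simps)
  have "\<forall>i. basis_prod x (L a) (L i) = 0" using basis_prod_at_L[OF x] by simp
  then have "complex_of_real (of_int a / 2 - j) * basis_prod x (Y (of_int a + j)) (Y (of_int a + j))
      = basis_prod x (Y j) (Y j) * complex_of_real (of_int a / 2 - j)"
    using prod_basis_bracket[OF sv_basis_in_SV[OF x], of "L a" "Y j" "Y (of_int a + j)"]
      sv_bracket_antisym[of "basis_prod x (L a)" "sv_basis (Y j)"] sv_bracket_Y_left_at_Y
      sv_bracket_L_left_at_Y[OF basis_prod_finite_support[OF x j], of a "of_int a + j"] j aj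
    by (simp add: sv_bracket_basis_L_Y)
  then show ?thesis
    using a by (intro that[OF \<open>a \<noteq> 0\<close> aj]) (metis mult.commute mult_cancel_left of_real_eq_0_iff)
qed

lemma prod_Y_Y_at_Y:
  assumes i: "sv_admissible eps (Y i)" and j: "sv_admissible eps (Y j)"
  shows "basis_prod (Y i) (Y j) (Y k) = 0"
proof -
  have off: "basis_prod (Y i) (Y j) (Y j) = 0" if "sv_admissible eps (Y i)" "sv_admissible eps (Y j)" "j \<noteq> i" for i j
    using prod_Y_at_Y_off_diagonal[of "Y j" i j] basis_prod_commute[of "Y i" "Y j"] that by simp
  show ?thesis
  proof (cases "k = j")
    case False
    then show ?thesis using prod_Y_at_Y_off_diagonal[OF i j] by simp
  next
    case True
    show ?thesis
    proof (cases "j = i")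
      case False
      then show ?thesis using off[OF i j] \<open>k = j\<close> by simp
    next
      case True
      obtain a :: int where "a \<noteq> 0" "sv_admissible eps (Y (of_int a + i))"
        "basis_prod (Y i) (Y (of_int a + i)) (Y (of_int a + i)) = basis_prod (Y i) (Y i) (Y i)"
        using prod_Y_at_Y_diagonal_shift[OF i i] by blast
      then show ?thesis using off[OF i] \<open>k = j\<close> \<open>j = i\<close> by simp
    qed
  qed
qed

lemma prod_L0_Y_at_Y_diagonal:
  assumes j: "sv_admissible eps (Y j)"
  shows "basis_prod (L 0) (Y j) (Y j) = 0"
proof -
  define c :: int where "c = (if j = 1/2 then 2 else 1)"
  have "c \<noteq> 0" and c: "of_int c / 2 - j \<noteq> 0" unfolding c_def by auto
  have "basis_prod (Y j) (L c) (Y (j + of_int c)) = 0"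
    using prod_Y_at_Y_off_diagonal[of "L c" j "j + of_int c"] basis_prod_commute[of "Y j" "L c"]
      j \<open>c \<noteq> 0\<close> by simp
  then have "basis_prod (Y j) (L 0) (Y j) * complex_of_real (of_int c / 2 - j) = 0"
    using degree_identity[OF sv_basis_in_SV[OF j], of "L c" "Y (j + of_int c)"]
      sv_bracket_L_left_at_Y[OF basis_prod_finite_support[of "Y j" "L 0"], of c "j + of_int c"] j
    by simp
  then show ?thesis
    using c basis_prod_commute[of "Y j" "L 0"] j by (simp only: mult_eq_0_iff of_real_eq_0_iff) simp
qed

lemma prod_L_Y_at_Y_diagonal_off:
  assumes j: "sv_admissible eps (Y j)" and "of_int c \<noteq> j"
  shows "basis_prod (L c) (Y j) (Y j) = 0"
proof -
  have "basis_prod (Y j) (L 0) (Y (j - of_int c)) = 0"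
    using prod_L0_Y_at_Y_diagonal[OF j] prod_Y_at_Y_off_diagonal[of "L 0" j "j - of_int c"]
      basis_prod_commute[of "Y j" "L 0"] j
    by (cases "c = 0") simp_all
  then have "complex_of_real (of_int c - j) * basis_prod (Y j) (L c) (Y j) = 0"
    using degree_identity[OF sv_basis_in_SV[OF j], of "L c" "Y j"]
      sv_bracket_L_left_at_Y[OF basis_prod_finite_support[of "Y j" "L 0"], of c j] j
    by simp
  then show ?thesis
    using assms basis_prod_commute[of "Y j" "L c"] by (simp add: complex_of_int_eq_of_real_iff)
qed

lemma prod_L_Y_at_Y:
  assumes j: "sv_admissible eps (Y j)"
  shows "basis_prod (L c) (Y j) (Y k) = 0"
proof (cases "k = j")
  case False
  then show ?thesis using prod_Y_at_Y_off_diagonal[of "L c" j k] j by simp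
next
  case True
  show ?thesis
  proof (cases "of_int c = j")
    case False
    then show ?thesis using prod_L_Y_at_Y_diagonal_off[OF j] True by simp
  next
    case True
    obtain a :: int where "a \<noteq> 0" "sv_admissible eps (Y (of_int a + j))"
      "basis_prod (L c) (Y (of_int a + j)) (Y (of_int a + j)) = basis_prod (L c) (Y j) (Y j)"
      using prod_Y_at_Y_diagonal_shift[of "L c", OF _ j] by auto
    then show ?thesis
      using prod_L_Y_at_Y_diagonal_off[of "of_int a + j" c] True \<open>k = j\<close> by simp
  qed
qed

lemma basis_prod_at_Y:
  assumes a: "sv_admissible eps a" and b: "sv_admissible eps b"
  shows "basis_prod a b (Y k) = 0"
proof -
  have with_Y: "basis_prod x (Y j) (Y k) = 0" if "sv_admissible eps x" "sv_admissible eps (Y j)" for x j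
    using that prod_L_Y_at_Y prod_Y_Y_at_Y basis_prod_commute[of "Y j"]
      prod_M_at_L_and_Y[OF sv_basis_in_SV[of eps "Y j"]]
    by (cases x) auto
  consider m n where "a = L m" "b = L n" | j where "b = Y j" | j where "a = Y j"
    | n where "b = M n" | n where "a = M n"
    by (cases a; cases b) auto
  then show ?thesis
  proof cases
    case 1
    then show ?thesis using basis_prod_L_L_at_Y by simp
  next
    case 2
    then show ?thesis using with_Y[OF a] b by simp
  next
    case 3
    then show ?thesis using with_Y[OF b] a basis_prod_commute[OF a b] by simp
  next
    case 4
    then show ?thesis using prod_M_at_L_and_Y[OF sv_basis_in_SV[OF a]] by simp
  next
    case 5
    then show ?thesis using prod_M_at_L_and_Y[OF sv_basis_in_SV[OF b]] basis_prod_commute[OF a b] by simp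
  qed
qed

section \<open>Vanishing of the product\<close>

lemma basis_prod_M: "sv_admissible eps x \<Longrightarrow> basis_prod x (M n) = (\<lambda>_. 0)"
proof
  fix k
  assume x: "sv_admissible eps x"
  obtain i j where i: "sv_admissible eps (Y i)" and j: "sv_admissible eps (Y j)" and "i \<noteq> j"
    and expand: "\<And>k. complex_of_real (i - j) * basis_prod x (M n) k
      = sv_bracket (sv_basis (Y i)) (basis_prod x (Y j)) k - sv_bracket (sv_basis (Y j)) (basis_prod x (Y i)) k"
    using prod_M_via_Y_Y[OF sv_basis_in_SV[OF x]] by blast
  have "complex_of_real (i - j) * basis_prod x (M n) k = 0"
    unfolding expand using basis_prod_at_L[OF x] basis_prod_at_Y[OF x] i j
    by (simp add: sv_bracket_Y_left_of_M_part)
  then show "basis_prod x (M n) k = 0" using \<open>i \<noteq> j\<close> by simp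
qed

lemma prod_basis_basis_prod:
  assumes a: "sv_admissible eps a" and b: "sv_admissible eps b" and z: "sv_admissible eps z"
  shows "p (sv_basis a) (basis_prod b z) = (\<lambda>_. 0)"
proof -
  have zero: "basis_prod b z k * basis_prod a k i = 0" for k i
    using basis_prod_at_L[OF b z] basis_prod_at_Y[OF b z] basis_prod_M[OF a] by (cases k) simp_all
  have "p (sv_basis a) (basis_prod b z) = (\<lambda>i. \<Sum>k\<in>{k. basis_prod b z k \<noteq> 0}. basis_prod b z k * basis_prod a k i)"
    using a b z by (intro prod_expand_right) (simp_all add: sv_basis_in_SV prod_in_SV)
  also have "\<dots> = (\<lambda>_. 0)"
    by (intro ext sum.neutral ballI) (rule zero)
  finally show ?thesis .
qed

lemma basis_prod_eq_0:
  assumes e: "sv_admissible eps e" and z: "sv_admissible eps z"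
  shows "basis_prod e z = (\<lambda>_. 0)"
proof -
  obtain a b c where a: "sv_admissible eps a" and b: "sv_admissible eps b" and "c \<noteq> 0"
    and bracket: "sv_bracket (sv_basis a) (sv_basis b) = (\<lambda>k. c * sv_basis e k)"
    using sv_basis_is_bracket[OF eps_cases e] by blast
  have "(\<lambda>i. c * basis_prod e z i) = p (sv_bracket (sv_basis a) (sv_basis b)) (sv_basis z)"
    unfolding bracket using e z by (simp add: prod_scale_left sv_basis_in_SV)
  also have "\<dots> = (\<lambda>_. 0)"
    using a b z by (simp add: prod_bracket_left prod_basis_basis_prod sv_basis_in_SV)
  finally show ?thesis using \<open>c \<noteq> 0\<close> by (simp add: fun_eq_iff)
qed

lemma prod_eq_0:
  assumes x: "x \<in> SV eps" and y: "y \<in> SV eps"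
  shows "p x y = (\<lambda>_. 0)"
proof -
  have "p x (sv_basis k) = (\<lambda>_. 0)" if "sv_admissible eps k" for k
    using prod_commute[OF x sv_basis_in_SV[OF that]] prod_expand_right[OF sv_basis_in_SV[OF that] x]
      basis_prod_eq_0[OF that SV_support_admissible[OF x]]
    by simp
  then show ?thesis
    using prod_expand_right[OF x y] SV_support_admissible[OF y] by simp
qed

end

theorem theorem4p3:
  fixes eps :: real
    and p :: "(sv_idx \<Rightarrow> complex) \<Rightarrow> (sv_idx \<Rightarrow> complex) \<Rightarrow> (sv_idx \<Rightarrow> complex)"
  assumes "eps = 0 \<or> eps = 1/2"
    and "comm_post_lie_SV eps p"
  shows "\<forall>x\<in>SV eps. \<forall>y\<in>SV eps. p x y = (\<lambda>_. 0)"
proof -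
  interpret SV_comm_post_lie eps p using assms by unfold_locales
  show ?thesis using prod_eq_0 by blast
qed

end
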